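(* Let $k\ge2$, $K\ge1$ be integers, let $R\ge k$ be an integer and $L$ a positive integer divisible by $R^{K-1}$. For $A$ dividing $L$ let $f_A=(\mathsf{1}^A\mathsf{2}^A\cdots\mathsf{k}^A)^{L/A}\in[k]^{kL}$, and for a word $w$ over $[K]$ let $\hat w$ be the word over $[k]$ obtained by replacing each symbol $l\in[K]$ of $w$ by $f_{R^{l-1}}$. Let $w_1,w_2$ be words over $[K]$ and let $s=(w_1',w_2')$ be any common subsequence between $\hat w_1$ and $\hat w_2$. Then \[\operatorname{span} s\ \ge\ \left(k+1-\frac kR-\frac{8R^{K-1}}{L}\right)\operatorname{len} s-2Lk(k+1)\cdot\mathrm{LCS}(w_1,w_2)-16R^{K-1}.\]
   Context: $\alpha^A$ denotes letter $\alpha$ repeated $A$ times, and $u^m$ denotes $m$ concatenated copies of the word $u$. Symbols are distinguishable positions. A common subsequence of words $u_1,u_2$ is a pair $(u_1',u_2')$ of subsequences of $u_1,u_2$ that are equal as words; $\operatorname{len}$ is their common length; $\mathrm{LCS}(u_1,u_2)$ is the maximum length of a common subsequence. The span of a subsequence $u'$ in $u$ is the length of the shortest block of consecutive symbols of $u$ containing $u'$, and $\operatorname{span}(u_1',u_2')=\operatorname{span}_{u_1}u_1'+\operatorname{span}_{u_2}u_2'$. *)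

theory Defs
  imports Complex_Main
begin

text \<open>Words are lists of natural numbers; the alphabet [k] is {1..k}.
A subsequence of a word u is represented by the set of positions it uses
(symbols are distinguishable positions), a subset of {..<length u}.\<close>

definition is_subseq_pos :: "nat list \<Rightarrow> nat set \<Rightarrow> bool" where
  "is_subseq_pos u I \<longleftrightarrow> I \<subseteq> {..<length u}"

definition is_common_subseq :: "nat list \<Rightarrow> nat list \<Rightarrow> nat set \<Rightarrow> nat set \<Rightarrow> bool" where
  "is_common_subseq u1 u2 I1 I2 \<longleftrightarrow>
     is_subseq_pos u1 I1 \<and> is_subseq_pos u2 I2 \<and> nths u1 I1 = nths u2 I2"

definition cs_len :: "nat list \<Rightarrow> nat set \<Rightarrow> nat" where
  "cs_len u1 I1 = length (nths u1 I1)"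

definition span_pos :: "nat set \<Rightarrow> nat" where
  "span_pos I = (if I = {} then 0 else Max I - Min I + 1)"

definition cs_span :: "nat set \<Rightarrow> nat set \<Rightarrow> nat" where
  "cs_span I1 I2 = span_pos I1 + span_pos I2"

definition LCS :: "nat list \<Rightarrow> nat list \<Rightarrow> nat" where
  "LCS u1 u2 = Max {length (nths u1 I1) | I1 I2. is_common_subseq u1 u2 I1 I2}"

definition fblock :: "nat \<Rightarrow> nat \<Rightarrow> nat \<Rightarrow> nat list" where
  "fblock k L A = concat (replicate (L div A) (concat (map (\<lambda>c. replicate A c) [1..<k+1])))"

definition hat :: "nat \<Rightarrow> nat \<Rightarrow> nat \<Rightarrow> nat list \<Rightarrow> nat list" where
  "hat k L R w = concat (map (\<lambda>l. fblock k L (R ^ (l - 1))) w)"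

end

theory Submission
  imports Defs "HOL-Library.Sublist"
begin

text \<open>Match the symbols of the common subsequence in order. Each matched pair lies in copies
of f_A in hat w1 and f_B in hat w2, where A and B are powers of R. If A \<noteq> B the two levels
differ by a factor of at least R, and moving inside a run of the coarser block while keeping the
letters matched forces the finer position either to stay in its run or to advance by k runs.
With a potential built from the offsets inside the runs, every such step costs at least
k + 1 - k/R in span, up to telescoping terms bounded by R^(K-1). Steps leaving a block of
length kL are charged to that block, which yields the error 8 R^(K-1)/L. Pairs with A = B match
equal letters of w1 and w2; ranking them by the LCS of the preceding prefixes shows that there are
at most 2 k L LCS(w1, w2) of them.\<close>

section \<open>Runs, blocks and the words hat w\<close>

lemma nth_concat_map_equal_length:
  assumes "\<forall>x\<in>set w. length (g x) = c" "p < c * length w"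
  shows "concat (map g w) ! p = g (w ! (p div c)) ! (p mod c)"
  using assms
proof (induction w arbitrary: p)
  case (Cons a w)
  show ?case
  proof (cases "p < c")
    case False
    then have "p div c = Suc ((p - c) div c)" "p mod c = (p - c) mod c"
      using Cons.prems by (auto simp: div_if mod_if)
    then show ?thesis using Cons False by (simp add: nth_append)
  qed (use Cons.prems in \<open>simp add: nth_append\<close>)
qed simp

lemma length_concat_map_equal_length:
  "\<forall>x\<in>set w. length (g x) = c \<Longrightarrow> length (concat (map g w)) = c * length w"
  by (induction w) auto

lemma nth_concat_replicate:
  assumes "p < m * length xs"
  shows "concat (replicate m xs) ! p = xs ! (p mod length xs)"
  using nth_concat_map_equal_length[of "replicate m ()" "\<lambda>_. xs" "length xs" p] assms
  by (simp add: map_replicate_const mult.commute)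

lemma length_fblock:
  assumes "A dvd L" "A > 0"
  shows "length (fblock k L A) = k * L"
proof -
  have "length (concat (map (\<lambda>c. replicate A c) [1..<k+1])) = A * k"
    by (subst length_concat_map_equal_length[where c = A]) auto
  then have "length (fblock k L A) = L div A * (A * k)"
    unfolding fblock_def by (simp add: length_concat sum_list_replicate del: upt_Suc)
  then show ?thesis using assms by (simp add: mult.commute)
qed

lemma fblock_nth:
  assumes "A dvd L" "A > 0" "j < k * L"
  shows "fblock k L A ! j = j div A mod k + 1"
proof -
  let ?base = "concat (map (\<lambda>c. replicate A c) [1..<k+1])"
  have len: "length ?base = k * A"
    by (subst length_concat_map_equal_length[where c = A]) auto
  have j: "j mod (k * A) < k * A"
    using assms by (metis mod_less_divisor mult_eq_0_iff neq0_conv not_less_zero)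
  have "L div A * length ?base = k * L"
    using assms len by (simp add: mult.commute mult.left_commute)
  then have "fblock k L A ! j = ?base ! (j mod (k * A))"
    unfolding fblock_def using nth_concat_replicate[of j "L div A" ?base] assms len by simp
  also have "\<dots> = [1..<k+1] ! (j mod (k * A) div A)"
    using nth_concat_map_equal_length[of "[1..<k+1]" "\<lambda>c. replicate A c" A] j assms
    by (simp add: mult.commute less_mult_imp_div_less del: upt_Suc)
  also have "\<dots> = j mod (k * A) div A + 1"
    using j assms by (simp add: less_mult_imp_div_less mult.commute del: upt_Suc)
  also have "j mod (k * A) div A = j div A mod k"
    using assms(2) by (simp add: mod_mult2_eq mult.commute)
  finally show ?thesis .
qed

lemma power_dvd_of_letter:
  fixes R K L l :: nat
  assumes "R ^ (K - 1) dvd L" "l \<in> {1..K}"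
  shows "R ^ (l - 1) dvd L"
  using assms by (auto intro: power_le_dvd)

lemma length_hat:
  assumes "R > 0" "R ^ (K - 1) dvd L" "set w \<subseteq> {1..K}"
  shows "length (hat k L R w) = k * L * length w"
  unfolding hat_def using assms power_dvd_of_letter[OF assms(2)]
  by (subst length_concat_map_equal_length[where c = "k * L"]) (auto simp: length_fblock)

text \<open>Position p of hat w lies in a copy of f_A with A = hat_level k L R w p.\<close>
definition hat_level :: "nat \<Rightarrow> nat \<Rightarrow> nat \<Rightarrow> nat list \<Rightarrow> nat \<Rightarrow> nat" where
  "hat_level k L R w p = R ^ (w ! (p div (k * L)) - 1)"

lemma hat_letter_in_alphabet:
  assumes "set w \<subseteq> {1..K}" "p < k * L * length w"
  shows "w ! (p div (k * L)) \<in> {1..K}"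
proof -
  have "p div (k * L) < length w"
    using assms(2) by (simp add: less_mult_imp_div_less mult.commute)
  then show ?thesis using assms(1) nth_mem by blast
qed

lemma hat_level_dvd:
  assumes "R ^ (K - 1) dvd L" "set w \<subseteq> {1..K}" "p < k * L * length w"
  shows "hat_level k L R w p dvd L"
  unfolding hat_level_def
  using power_dvd_of_letter[OF assms(1) hat_letter_in_alphabet[OF assms(2,3)]] .

lemma hat_level_le:
  assumes "R > 0" "set w \<subseteq> {1..K}" "p < k * L * length w"
  shows "hat_level k L R w p \<le> R ^ (K - 1)"
  unfolding hat_level_def using hat_letter_in_alphabet[OF assms(2,3)] assms(1)
  by (intro power_increasing) auto

lemma hat_level_eq_imp_letter_eq:
  assumes "R \<ge> 2" "set w1 \<subseteq> {1..K}" "set w2 \<subseteq> {1..K}"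
    "p < k * L * length w1" "q < k * L * length w2"
    "hat_level k L R w1 p = hat_level k L R w2 q"
  shows "w1 ! (p div (k * L)) = w2 ! (q div (k * L))"
  using assms hat_letter_in_alphabet[OF assms(2,4)] hat_letter_in_alphabet[OF assms(3,5)]
  by (auto simp: hat_level_def power_inject_exp)

lemma mod_mult_div_mod_eq:
  fixes p k L A :: nat
  assumes "A dvd L" "A > 0"
  shows "p mod (k * L) div A mod k = p div A mod k"
proof -
  obtain M where "L = A * M" using assms(1) by blast
  then have "p mod (k * L) div A = p div A mod (k * M)"
    using assms(2) by (simp add: mod_mult2_eq ac_simps)
  then show ?thesis by (simp add: mod_mod_cancel)
qed

lemma hat_nth:
  assumes "R > 0" "R ^ (K - 1) dvd L" "set w \<subseteq> {1..K}" "p < k * L * length w"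
  shows "hat k L R w ! p = p div hat_level k L R w p mod k + 1"
proof -
  let ?A = "hat_level k L R w p"
  have "k * L > 0" using assms(4) by (cases "k * L") auto
  have "hat k L R w ! p = fblock k L ?A ! (p mod (k * L))"
    unfolding hat_def hat_level_def using assms power_dvd_of_letter[OF assms(2)]
    by (subst nth_concat_map_equal_length[where c = "k * L"])
      (auto simp: length_fblock mult.commute)
  also have "\<dots> = p mod (k * L) div ?A mod k + 1"
    using \<open>k * L > 0\<close> assms hat_level_dvd[OF assms(2-4)]
    by (intro fblock_nth) (auto simp: hat_level_def)
  also have "\<dots> = p div ?A mod k + 1"
    using assms hat_level_dvd[OF assms(2-4)] by (simp add: mod_mult_div_mod_eq hat_level_def)
  finally show ?thesis .
qed

section \<open>Matched steps between runs of different levels\<close>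

definition levels_apart :: "nat \<Rightarrow> nat \<Rightarrow> nat \<Rightarrow> bool" where
  "levels_apart R A B \<longleftrightarrow> A = B \<or> R * A \<le> B \<or> R * B \<le> A"

lemma levels_apart_powers: "levels_apart R (R ^ a) (R ^ b)"
proof (cases "R = 0")
  case False
  show ?thesis
  proof (cases a b rule: linorder_cases)
    case less
    then have "R ^ Suc a \<le> R ^ b" using False by (intro power_increasing) auto
    then show ?thesis unfolding levels_apart_def by auto
  next
    case greater
    then have "R ^ Suc b \<le> R ^ a" using False by (intro power_increasing) auto
    then show ?thesis unfolding levels_apart_def by auto
  qed (simp add: levels_apart_def)
qed (simp add: levels_apart_def)

lemma levels_apart_commute: "levels_apart R A B \<Longrightarrow> levels_apart R B A"
  unfolding levels_apart_def by auto

lemma levels_apart_less: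
  assumes "levels_apart R A B" "A < B" "R > 0"
  shows "R * A \<le> B"
proof -
  have "B \<le> R * B" using assms(3) by simp
  then show ?thesis using assms(1,2) unfolding levels_apart_def by linarith
qed

lemma levels_apart_le_bound:
  assumes "levels_apart R A B" "A \<noteq> B" "0 < A" "0 < B" "A \<le> T" "B \<le> T"
  shows "R \<le> T"
proof -
  have "R \<le> R * A" "R \<le> R * B" using assms(3,4) by simp_all
  then show ?thesis using assms unfolding levels_apart_def by linarith
qed

lemma real_diff_eq_div_mod:
  fixes p p' A :: nat
  assumes "p \<le> p'"
  shows "real (p' - p)
    = real A * (real (p' div A) - real (p div A)) + (real (p' mod A) - real (p mod A))"
proof -
  have "real n = real A * real (n div A) + real (n mod A)" for n
    by (simp flip: of_nat_mult of_nat_add)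
  from this[of p] this[of p'] show ?thesis using assms by (simp add: of_nat_diff algebra_simps)
qed

lemma real_mod_add_one_le: "0 < B \<Longrightarrow> real (q mod B) + 1 \<le> real (B :: nat)"
  by (metis Suc_leI mod_less_divisor of_nat_Suc of_nat_le_iff add.commute)

text \<open>p lies in a run of length A of the finer block, q in a run of length B \<ge> R A of the
  coarser one.\<close>
definition cross_potential :: "nat \<Rightarrow> nat \<Rightarrow> nat \<Rightarrow> nat \<Rightarrow> nat \<Rightarrow> nat \<Rightarrow> real" where
  "cross_potential k R A B p q = real k / real R * real (q mod B) - (real k - 1) * real (p mod A)"

text \<open>Inside one run of length B the letter is fixed, so p div A and p' div A agree mod k:
  p stays in its run or advances by at least k runs.\<close>
lemma cross_step_gain_same_run:
  fixes k R A B p q p' q' :: nat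
  assumes k: "k \<ge> 1" "R \<ge> k" and "A > 0" "p < p'" "q < q'"
    and same_run: "q div B = q' div B" and match: "p div A mod k = p' div A mod k"
  shows "real (p' - p) + real (q' - q) \<ge> real k + 1 - real k / real R
          + cross_potential k R A B p' q' - cross_potential k R A B p q"
proof -
  define x where "x = real k / real R"
  have "0 \<le> x" "x \<le> 1" using k by (auto simp: x_def)
  have "q mod B < q' mod B" using \<open>q < q'\<close> same_run by (metis div_mult_mod_eq add_less_cancel_left)
  then have gain_q: "real (q' - q) = real (q' mod B) - real (q mod B)"
    "(1 - x) * (real (q' mod B) - real (q mod B) - 1) \<ge> 0"
    using real_diff_eq_div_mod[of q q' B] \<open>q < q'\<close> same_run \<open>x \<le> 1\<close> by simp_all
  have "p div A \<le> p' div A" using \<open>p < p'\<close> by (simp add: div_le_mono)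
  have "real (p' - p)
    \<ge> real k * (1 + real (p mod A) - real (p' mod A)) + (real (p' mod A) - real (p mod A))"
  proof (cases "p div A = p' div A")
    case True
    then have "p mod A < p' mod A" using \<open>p < p'\<close> by (metis div_mult_mod_eq add_less_cancel_left)
    moreover have "real (p' - p) = real (p' mod A) - real (p mod A)"
      using real_diff_eq_div_mod[of p p' A] \<open>p < p'\<close> True by simp
    moreover have "real k * (real (p' mod A) - real (p mod A) - 1) \<ge> 0"
      using \<open>p mod A < p' mod A\<close> by simp
    ultimately show ?thesis unfolding ring_distribs by linarith
  next
    case False
    then have "k dvd p' div A - p div A"
      using mod_eq_dvd_iff_nat[OF \<open>p div A \<le> p' div A\<close>] match by metis
    then have "real (p' div A) - real (p div A) \<ge> real k"
      using False \<open>p div A \<le> p' div A\<close> by (auto dest: dvd_imp_le)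
    then have "real A * (real (p' div A) - real (p div A)) \<ge> real k * real A"
      using \<open>A > 0\<close> by (simp add: mult.commute)
    moreover have "real k * (1 + real (p mod A)) \<le> real k * real A"
      using real_mod_add_one_le[OF \<open>A > 0\<close>, of p] by (intro mult_left_mono) auto
    moreover have "real k * real (p' mod A) \<ge> 0" by simp
    ultimately show ?thesis using real_diff_eq_div_mod[of p p' A] \<open>p < p'\<close>
      unfolding ring_distribs by linarith
  qed
  with gain_q show ?thesis by (simp add: cross_potential_def x_def algebra_simps)
qed

lemma cross_step_gain_new_run:
  fixes k R A B p q p' q' :: nat
  assumes k: "k \<ge> 1" "R \<ge> k" and "A > 0" "R * A \<le> B" "p < p'" "q div B < q' div B"
  shows "real (p' - p) + real (q' - q) \<ge> real k + 1 - real k / real R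
          + cross_potential k R A B p' q' - cross_potential k R A B p q"
proof -
  have "R > 0" using k by linarith
  then have "B > 0" using \<open>A > 0\<close> \<open>R * A \<le> B\<close> by (metis mult_pos_pos order.strict_trans2)
  define x where "x = real k / real R"
  have x: "0 \<le> x" "x \<le> 1" "real k * real A \<le> x * real B"
    using k \<open>R * A \<le> B\<close> \<open>R > 0\<close> by (auto simp: x_def field_simps simp flip: of_nat_mult)
  have "q \<le> q'" using assms(6) div_le_mono[of q' q B] by (cases "q \<le> q'") auto
  then have "real (q' - q) \<ge> real B + (real (q' mod B) - real (q mod B))"
    using real_diff_eq_div_mod[of q q' B] assms(6) \<open>B > 0\<close> by simp
  moreover have "real (p' - p) \<ge> 1" using \<open>p < p'\<close> by simp
  moreover have "(1 - x) * (real (q' mod B) - real (q mod B)) \<ge> (1 - x) * (1 - real B)"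
    using real_mod_add_one_le[OF \<open>B > 0\<close>, of q] x by (intro mult_left_mono) auto
  moreover have "(real k - 1) * (real (p' mod A) - real (p mod A)) \<ge> (real k - 1) * (1 - real A)"
    using real_mod_add_one_le[OF \<open>A > 0\<close>, of p] k by (intro mult_left_mono) auto
  ultimately have "real (p' - p) + real (q' - q) \<ge> real k + 1 - x
      + x * (real (q' mod B) - real (q mod B)) - (real k - 1) * (real (p' mod A) - real (p mod A))"
    using x unfolding ring_distribs by linarith
  then show ?thesis by (simp add: cross_potential_def x_def algebra_simps)
qed

lemma cross_step_gain:
  fixes k R A B p q p' q' :: nat
  assumes k: "k \<ge> 1" "R \<ge> k" and "A > 0" "R * A \<le> B" "p < p'" "q < q'"
    and match: "p div A mod k = q div B mod k" "p' div A mod k = q' div B mod k"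
  shows "real (p' - p) + real (q' - q) \<ge> real k + 1 - real k / real R
          + cross_potential k R A B p' q' - cross_potential k R A B p q"
proof (cases "q div B = q' div B")
  case True
  then show ?thesis using cross_step_gain_same_run[OF k \<open>A > 0\<close> \<open>p < p'\<close> \<open>q < q'\<close>] match by simp
next
  case False
  then have "q div B < q' div B" using \<open>q < q'\<close> div_le_mono[of q q' B] by simp
  then show ?thesis using cross_step_gain_new_run[OF k \<open>A > 0\<close> \<open>R * A \<le> B\<close> \<open>p < p'\<close>] by simp
qed

lemma abs_cross_potential_le:
  assumes "1 \<le> k" "k \<le> R" "A > 0" "R * A \<le> B"
  shows "\<bar>cross_potential k R A B p q\<bar> \<le> real B"
proof -
  have "R > 0" using assms(1,2) by linarith
  then have "B > 0" using assms(3,4) by (metis mult_pos_pos order.strict_trans2)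
  have "real k / real R * real (q mod B) \<le> 1 * real B"
    using assms \<open>B > 0\<close> by (intro mult_mono) (auto simp: less_imp_le)
  moreover have "(real k - 1) * real (p mod A) \<le> real R * real A"
    using assms by (intro mult_mono) (auto simp: less_imp_le)
  moreover have "real R * real A \<le> real B"
    using assms(4) by (simp flip: of_nat_mult)
  moreover have "0 \<le> real k / real R * real (q mod B)" "0 \<le> (real k - 1) * real (p mod A)"
    using assms by auto
  ultimately show ?thesis unfolding cross_potential_def by linarith
qed

definition level_potential :: "nat \<Rightarrow> nat \<Rightarrow> nat \<Rightarrow> nat \<Rightarrow> nat \<Rightarrow> nat \<Rightarrow> real" where
  "level_potential k R A B p q =
     (if A < B then cross_potential k R A B p q
      else if B < A then cross_potential k R B A q p else 0)"

lemma abs_level_potential_le: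
  assumes "1 \<le> k" "k \<le> R" "levels_apart R A B" "0 < A" "0 < B" "A \<le> T" "B \<le> T"
  shows "\<bar>level_potential k R A B p q\<bar> \<le> real T"
proof -
  have "R > 0" using assms by linarith
  moreover note levels_apart_commute[OF assms(3)]
  ultimately consider "A = B" | "A < B" "R * A \<le> B" | "B < A" "R * B \<le> A"
    using assms(3) levels_apart_less by (cases A B rule: linorder_cases) auto
  then show ?thesis
  proof cases
    case 2
    then show ?thesis using abs_cross_potential_le[of k R A B p q] assms
      by (simp add: level_potential_def)
  next
    case 3
    then show ?thesis using abs_cross_potential_le[of k R B A q p] assms
      by (simp add: level_potential_def)
  qed (simp add: level_potential_def)
qed

lemma level_step_gain:
  fixes k R A B p q p' q' :: nat
  assumes k: "k \<ge> 1" "R \<ge> k" and "A > 0" "B > 0" "levels_apart R A B" "p < p'" "q < q'"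
    and match: "p div A mod k = q div B mod k" "p' div A mod k = q' div B mod k"
  shows "real (p' - p) + real (q' - q) \<ge> (real k + 1 - real k / real R) * of_bool (A \<noteq> B)
          + level_potential k R A B p' q' - level_potential k R A B p q"
proof -
  have "R > 0" using k by linarith
  show ?thesis
  proof (cases A B rule: linorder_cases)
    case less
    then show ?thesis
      using cross_step_gain[OF k \<open>A > 0\<close> levels_apart_less[OF assms(5) less \<open>R > 0\<close>]
          \<open>p < p'\<close> \<open>q < q'\<close> match]
      by (simp add: level_potential_def)
  next
    case greater
    from cross_step_gain[OF k \<open>B > 0\<close>
        levels_apart_less[OF levels_apart_commute[OF assms(5)] greater \<open>R > 0\<close>]
        \<open>q < q'\<close> \<open>p < p'\<close> match[symmetric]]
    show ?thesis using greater by (simp add: level_potential_def)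
  qed (simp add: level_potential_def)
qed

text \<open>Charging a step to the block structure of length \<kappa>: inside a block the step gains g,
  and leaving a block gains \<kappa> \<ge> \<kappa> g / C. The remainder terms telescope.\<close>
lemma block_weighted_gain:
  fixes p q p' q' \<kappa> :: nat and g C :: real
  assumes "p \<le> p'" "q \<le> q'" "g \<le> C" "0 \<le> C"
    and gain: "p div \<kappa> = p' div \<kappa> \<Longrightarrow> q div \<kappa> = q' div \<kappa> \<Longrightarrow>
      g \<le> real (p' - p) + real (q' - q)"
  shows "(real \<kappa> + C) * (real (p' - p) + real (q' - q))
      \<ge> real \<kappa> * g + C * (real (p' mod \<kappa> + q' mod \<kappa>) - real (p mod \<kappa> + q mod \<kappa>))"
proof -
  define E where "E = real (p' - p) + real (q' - q)"
  define d where "d = real (p' div \<kappa>) - real (p div \<kappa>) + real (q' div \<kappa>) - real (q div \<kappa>)"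
  define \<Delta> where "\<Delta> = real (p' mod \<kappa> + q' mod \<kappa>) - real (p mod \<kappa> + q mod \<kappa>)"
  have E: "E = real \<kappa> * d + \<Delta>"
    using real_diff_eq_div_mod[OF assms(1), of \<kappa>] real_diff_eq_div_mod[OF assms(2), of \<kappa>]
    by (simp add: E_def d_def \<Delta>_def algebra_simps)
  have "p div \<kappa> \<le> p' div \<kappa>" "q div \<kappa> \<le> q' div \<kappa>"
    using assms(1,2) by (simp_all add: div_le_mono)
  show ?thesis
  proof (cases "p div \<kappa> = p' div \<kappa> \<and> q div \<kappa> = q' div \<kappa>")
    case True
    then have "E = \<Delta>" "g \<le> E" using E gain by (simp_all add: d_def E_def)
    then show ?thesis unfolding E_def[symmetric] \<Delta>_def[symmetric]
      by (simp add: distrib_right mult_left_mono)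
  next
    case False
    then have "d \<ge> 1" using \<open>p div \<kappa> \<le> p' div \<kappa>\<close> \<open>q div \<kappa> \<le> q' div \<kappa>\<close>
      unfolding d_def by linarith
    then have "real \<kappa> \<le> real \<kappa> * d" by (simp add: mult_le_cancel_left1)
    then have "C * E \<ge> C * real \<kappa> + C * \<Delta>"
      using E \<open>0 \<le> C\<close> by (simp add: distrib_left mult_left_mono)
    moreover have "real \<kappa> * g \<le> real \<kappa> * C" using assms(3) by (simp add: mult_left_mono)
    moreover have "0 \<le> real \<kappa> * E" by (simp add: E_def)
    ultimately show ?thesis unfolding E_def[symmetric] \<Delta>_def[symmetric]
      by (simp add: distrib_right algebra_simps)
  qed
qed

lemma sum_of_nat_diff_telescope:
  fixes p :: "nat \<Rightarrow> nat"
  assumes "\<And>i. i < m \<Longrightarrow> p i \<le> p (Suc i)"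
  shows "(\<Sum>i<m. real (p (Suc i) - p i)) = real (p m - p 0)"
proof -
  have "p 0 \<le> p m \<and> (\<Sum>i<m. real (p (Suc i) - p i)) = real (p m - p 0)"
    using assms
  proof (induction m)
    case (Suc m)
    then have IH: "p 0 \<le> p m \<and> (\<Sum>i<m. real (p (Suc i) - p i)) = real (p m - p 0)"
      and "p m \<le> p (Suc m)" by auto
    then show ?case by (simp add: of_nat_diff)
  qed simp
  then show ?thesis ..
qed

lemma card_le_sum_shifted_indicator:
  "real (card {i. i \<le> m \<and> P i}) - 1 \<le> (\<Sum>i<m. of_bool (P (Suc i)) :: real)"
proof -
  have "{i. i \<le> m \<and> P i} = {..<Suc m} \<inter> {i. P i}" by auto
  then have "real (card {i. i \<le> m \<and> P i}) = (\<Sum>i<Suc m. of_bool (P i))"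
    by (subst sum_of_bool_eq) simp_all
  also have "\<dots> = of_bool (P 0) + (\<Sum>i<m. of_bool (P (Suc i)))" by (rule sum.lessThan_Suc_shift)
  finally show ?thesis by simp
qed

lemma weighted_switch_bound:
  fixes \<kappa> \<rho> \<epsilon> C T S n :: real
  assumes "0 < \<kappa> + C" and loss: "C * \<rho> \<le> (\<kappa> + C) * \<epsilon>" and "0 \<le> n"
    and additive: "\<kappa> * \<rho> + 2 * \<kappa> * T + 2 * C * (\<kappa> - 1) \<le> 16 * T * (\<kappa> + C)"
    and chain: "(\<kappa> + C) * S \<ge> \<kappa> * \<rho> * (n - 1) - 2 * \<kappa> * T - 2 * C * (\<kappa> - 1)"
  shows "(\<rho> - \<epsilon>) * n - 16 * T \<le> S"
proof -
  have "(\<kappa> + C) * ((\<rho> - \<epsilon>) * n - 16 * T)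
      = \<kappa> * \<rho> * n - (((\<kappa> + C) * \<epsilon> - C * \<rho>) * n) - 16 * T * (\<kappa> + C)"
    by (simp add: algebra_simps)
  also have "\<dots> \<le> \<kappa> * \<rho> * n - 16 * T * (\<kappa> + C)"
    using loss \<open>0 \<le> n\<close> by simp
  also have "\<dots> \<le> (\<kappa> + C) * S" using chain additive by (simp add: algebra_simps)
  finally show ?thesis using \<open>0 < \<kappa> + C\<close> by (simp add: mult_le_cancel_left_pos)
qed

locale matched_chain =
  fixes k R T \<kappa> m :: nat and p q A B :: "nat \<Rightarrow> nat"
  assumes k_le_R: "1 \<le> k" "k \<le> R" and block_pos: "0 < \<kappa>"
    and incr: "\<And>i. i < m \<Longrightarrow> p i < p (Suc i) \<and> q i < q (Suc i)"
    and match: "\<And>i. i \<le> m \<Longrightarrow> p i div A i mod k = q i div B i mod k"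
    and block_A: "\<And>i. i < m \<Longrightarrow> p i div \<kappa> = p (Suc i) div \<kappa> \<Longrightarrow> A (Suc i) = A i"
    and block_B: "\<And>i. i < m \<Longrightarrow> q i div \<kappa> = q (Suc i) div \<kappa> \<Longrightarrow> B (Suc i) = B i"
    and levels: "\<And>i. i \<le> m \<Longrightarrow>
      0 < A i \<and> 0 < B i \<and> A i \<le> T \<and> B i \<le> T \<and> levels_apart R (A i) (B i)"
begin

definition switch_gain :: real where
  "switch_gain = real k + 1 - real k / real R"

definition block_weight :: real where
  "block_weight = real k + 1 + 2 * real T"

definition potential :: "nat \<Rightarrow> real" where
  "potential i = real \<kappa> * level_potential k R (A i) (B i) (p i) (q i)
    + block_weight * real (p i mod \<kappa> + q i mod \<kappa>)"

lemma switch_gain_bounds: "0 \<le> switch_gain" "switch_gain \<le> real k + 1"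
proof -
  have "0 \<le> real k / real R" "real k / real R \<le> 1" using k_le_R by auto
  then show "0 \<le> switch_gain" "switch_gain \<le> real k + 1" by (auto simp: switch_gain_def)
qed

lemma abs_level_potential_chain_le: "i \<le> m \<Longrightarrow>
    \<bar>level_potential k R (A i) (B i) (p i) (q i)\<bar> \<le> real T"
  using levels k_le_R by (intro abs_level_potential_le) auto

lemma potential_step:
  assumes "i < m"
  shows "(real \<kappa> + block_weight) * (real (p (Suc i) - p i) + real (q (Suc i) - q i))
    \<ge> real \<kappa> * switch_gain * of_bool (A (Suc i) \<noteq> B (Suc i)) + (potential (Suc i) - potential i)"
proof -
  let ?\<Phi> = "\<lambda>i. level_potential k R (A i) (B i) (p i) (q i)"
  let ?g = "switch_gain * of_bool (A (Suc i) \<noteq> B (Suc i)) + ?\<Phi> (Suc i) - ?\<Phi> i"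
  have "(real \<kappa> + block_weight) * (real (p (Suc i) - p i) + real (q (Suc i) - q i))
    \<ge> real \<kappa> * ?g + block_weight * (real (p (Suc i) mod \<kappa> + q (Suc i) mod \<kappa>)
      - real (p i mod \<kappa> + q i mod \<kappa>))"
  proof (rule block_weighted_gain)
    show "?g \<le> block_weight"
      using abs_level_potential_chain_le[of i] abs_level_potential_chain_le[of "Suc i"]
        switch_gain_bounds assms by (auto simp: block_weight_def)
    assume "p i div \<kappa> = p (Suc i) div \<kappa>" "q i div \<kappa> = q (Suc i) div \<kappa>"
    then have "A (Suc i) = A i" "B (Suc i) = B i" using block_A block_B assms by auto
    then show "?g \<le> real (p (Suc i) - p i) + real (q (Suc i) - q i)"
      using level_step_gain[OF k_le_R, of "A i" "B i" "p i" "p (Suc i)" "q i" "q (Suc i)"]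
        levels[of i] incr[OF assms] match[of i] match[of "Suc i"] assms
      by (simp add: switch_gain_def)
  qed (use incr[OF assms] in \<open>auto simp: block_weight_def\<close>)
  then show ?thesis by (simp add: potential_def algebra_simps)
qed

lemma potential_boundary:
  "potential m - potential 0 \<ge> - 2 * real \<kappa> * real T - 2 * block_weight * (real \<kappa> - 1)"
proof -
  have "p 0 mod \<kappa> + 1 \<le> \<kappa>" "q 0 mod \<kappa> + 1 \<le> \<kappa>"
    using block_pos by (simp_all add: Suc_leI)
  then have "block_weight * real (p 0 mod \<kappa> + q 0 mod \<kappa>) \<le> block_weight * (2 * (real \<kappa> - 1))"
    by (intro mult_left_mono) (auto simp: block_weight_def)
  moreover have "real \<kappa> * level_potential k R (A 0) (B 0) (p 0) (q 0) \<le> real \<kappa> * real T"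
    "- (real \<kappa> * real T) \<le> real \<kappa> * level_potential k R (A m) (B m) (p m) (q m)"
    using abs_level_potential_chain_le[of 0] abs_level_potential_chain_le[of m]
    by (auto intro: mult_left_mono simp flip: mult_minus_right)
  moreover have "0 \<le> block_weight * real (p m mod \<kappa> + q m mod \<kappa>)" by (simp add: block_weight_def)
  ultimately show ?thesis unfolding potential_def by linarith
qed

lemma span_gain:
  "(real \<kappa> + block_weight) * (real (p m - p 0) + real (q m - q 0))
    \<ge> real \<kappa> * switch_gain * (real (card {i. i \<le> m \<and> A i \<noteq> B i}) - 1)
      - 2 * real \<kappa> * real T - 2 * block_weight * (real \<kappa> - 1)"
proof -
  let ?\<chi> = "\<lambda>i. of_bool (A i \<noteq> B i) :: real"
  have "(\<Sum>i<m. real (p (Suc i) - p i)) = real (p m - p 0)"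
    "(\<Sum>i<m. real (q (Suc i) - q i)) = real (q m - q 0)"
    using incr by (auto intro: sum_of_nat_diff_telescope less_imp_le)
  then have "(real \<kappa> + block_weight) * (real (p m - p 0) + real (q m - q 0))
      = (\<Sum>i<m. (real \<kappa> + block_weight) * (real (p (Suc i) - p i) + real (q (Suc i) - q i)))"
    by (simp only: sum_distrib_left[symmetric] sum.distrib)
  also have "\<dots> \<ge> (\<Sum>i<m. real \<kappa> * switch_gain * ?\<chi> (Suc i) + (potential (Suc i) - potential i))"
    using potential_step by (intro sum_mono) auto
  finally have "(real \<kappa> + block_weight) * (real (p m - p 0) + real (q m - q 0))
      \<ge> real \<kappa> * switch_gain * (\<Sum>i<m. ?\<chi> (Suc i)) + (potential m - potential 0)"
    by (simp only: sum.distrib sum_lessThan_telescope sum_distrib_left)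
  moreover have "real \<kappa> * switch_gain * (real (card {i. i \<le> m \<and> A i \<noteq> B i}) - 1)
      \<le> real \<kappa> * switch_gain * (\<Sum>i<m. ?\<chi> (Suc i))"
    using switch_gain_bounds by (intro mult_left_mono card_le_sum_shifted_indicator) auto
  ultimately show ?thesis using potential_boundary by linarith
qed

lemma switch_span_bound:
  assumes "2 \<le> k" "\<kappa> = k * L"
  shows "(switch_gain - 8 * real T / real L) * real (card {i. i \<le> m \<and> A i \<noteq> B i}) - 16 * real T
    \<le> real (p m - p 0) + real (q m - q 0)"
proof (cases "card {i. i \<le> m \<and> A i \<noteq> B i} = 0")
  case False
  then obtain i where "i \<le> m" "A i \<noteq> B i"
    by (metis (mono_tags, lifting) card.empty empty_Collect_eq)
  then have "R \<le> T" using levels[of i] levels_apart_le_bound[of R "A i" "B i" T] by auto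
  then have "real k \<le> real T" "2 \<le> real k" "1 \<le> real T" using assms k_le_R by auto
  have "1 \<le> real \<kappa>" using block_pos by simp
  have \<rho>: "0 \<le> switch_gain" "switch_gain \<le> real k + 1" by (rule switch_gain_bounds)+
  have "block_weight \<le> 4 * real T" "0 \<le> block_weight"
    using \<open>real k \<le> real T\<close> \<open>1 \<le> real T\<close> by (auto simp: block_weight_def)
  show ?thesis
  proof (rule weighted_switch_bound[where \<kappa> = "real \<kappa>" and C = block_weight])
    \<comment> \<open>A switch costs at most block_weight (k + 1) \<le> 8 k T = \<kappa> (8 T / L): the error term.\<close>
    have "real k * real k \<le> real k * real T" "2 * real k \<le> real k * real T"
      "2 * real T \<le> real k * real T" "1 \<le> real k * real T"
      using \<open>real k \<le> real T\<close> \<open>2 \<le> real k\<close> \<open>1 \<le> real T\<close>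
        mult_mono[of 1 "real k" 1 "real T"] by (auto intro: mult_mono simp: mult.commute)
    then have "real k * real k + 2 * real k + 1 + 2 * (real k * real T) + 2 * real T
        \<le> 8 * (real k * real T)" by linarith
    moreover have "block_weight * (real k + 1)
        = real k * real k + 2 * real k + 1 + 2 * (real k * real T) + 2 * real T"
      by (simp add: block_weight_def algebra_simps)
    moreover have "8 * (real k * real T) = real \<kappa> * (8 * real T / real L)"
      using block_pos assms by simp
    ultimately have "block_weight * (real k + 1) \<le> real \<kappa> * (8 * real T / real L)" by simp
    moreover have "block_weight * switch_gain \<le> block_weight * (real k + 1)"
      using \<rho> \<open>0 \<le> block_weight\<close> by (intro mult_left_mono)
    moreover have "0 \<le> block_weight * (8 * real T / real L)" using \<open>0 \<le> block_weight\<close> by simp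
    ultimately show "block_weight * switch_gain \<le> (real \<kappa> + block_weight) * (8 * real T / real L)"
      unfolding distrib_right by linarith
    have "real \<kappa> * switch_gain \<le> real \<kappa> * (2 * real T)"
      using \<rho> \<open>real k \<le> real T\<close> \<open>1 \<le> real T\<close> by (intro mult_left_mono) auto
    moreover have "2 * block_weight * (real \<kappa> - 1) \<le> 2 * (4 * real T) * real \<kappa>"
      using \<open>block_weight \<le> 4 * real T\<close> \<open>0 \<le> block_weight\<close> \<open>1 \<le> real \<kappa>\<close> by (intro mult_mono) auto
    moreover have "0 \<le> block_weight * real T" using \<open>0 \<le> block_weight\<close> by simp
    ultimately show "real \<kappa> * switch_gain + 2 * real \<kappa> * real T + 2 * block_weight * (real \<kappa> - 1)
        \<le> 16 * real T * (real \<kappa> + block_weight)"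
      by (simp add: algebra_simps) (use mult_nonneg_nonneg[of "real T" "real \<kappa>"] in linarith)
  qed (use span_gain \<open>1 \<le> real \<kappa>\<close> \<open>0 \<le> block_weight\<close> in auto)
next
  case True
  show ?thesis unfolding True by simp
qed

end

section \<open>Longest common subsequences\<close>

lemma nths_inter_lessThan_length: "nths xs (I \<inter> {..<length xs}) = nths xs I"
  unfolding nths_def by (rule arg_cong[where f = "map fst"], rule filter_cong) (auto simp: set_zip)

lemma nths_eq_map_nth_filter: "nths xs I = map ((!) xs) (filter (\<lambda>i. i \<in> I) [0..<length xs])"
proof (induction xs rule: rev_induct)
  case (snoc x xs)
  have "map ((!) (xs @ [x])) (filter (\<lambda>i. i \<in> I) [0..<length xs])
      = map ((!) xs) (filter (\<lambda>i. i \<in> I) [0..<length xs])"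
    by (rule map_cong) (auto simp: nth_append)
  then show ?case using snoc by (simp add: nths_append)
qed simp

lemma common_subseq_lengths_eq:
  "{length (nths u1 I1) | I1 I2. is_common_subseq u1 u2 I1 I2}
    = {length zs | zs. subseq zs u1 \<and> subseq zs u2}"
proof safe
  fix I1 I2 assume "is_common_subseq u1 u2 I1 I2"
  then show "\<exists>zs. length (nths u1 I1) = length zs \<and> subseq zs u1 \<and> subseq zs u2"
    unfolding is_common_subseq_def by (metis subseq_conv_nths)
next
  fix zs assume "subseq zs u1" "subseq zs u2"
  then obtain N1 N2 where "zs = nths u1 N1" "zs = nths u2 N2" by (meson subseq_conv_nths)
  then have "is_common_subseq u1 u2 (N1 \<inter> {..<length u1}) (N2 \<inter> {..<length u2})"
    by (simp add: is_common_subseq_def is_subseq_pos_def nths_inter_lessThan_length)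
  then show "\<exists>I1 I2. length zs = length (nths u1 I1) \<and> is_common_subseq u1 u2 I1 I2"
    using \<open>zs = nths u1 N1\<close> nths_inter_lessThan_length by metis
qed

lemma finite_common_subseq_lengths: "finite {length zs | zs. subseq zs u1 \<and> subseq zs u2}"
  by (rule finite_subset[of _ "{..length u1}"]) (auto dest: list_emb_length)

lemma length_le_LCS: "subseq zs u1 \<Longrightarrow> subseq zs u2 \<Longrightarrow> length zs \<le> LCS u1 u2"
  unfolding LCS_def common_subseq_lengths_eq
  by (intro Max_ge[OF finite_common_subseq_lengths]) auto

lemma LCS_witness: "\<exists>zs. subseq zs u1 \<and> subseq zs u2 \<and> length zs = LCS u1 u2"
proof -
  have "length ([] :: nat list) \<in> {length zs | zs. subseq zs u1 \<and> subseq zs u2}" by auto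
  then have "{length zs | zs. subseq zs u1 \<and> subseq zs u2} \<noteq> {}" by blast
  from Max_in[OF finite_common_subseq_lengths this] show ?thesis
    unfolding LCS_def common_subseq_lengths_eq by auto
qed

lemma LCS_mono: "subseq v1 u1 \<Longrightarrow> subseq v2 u2 \<Longrightarrow> LCS v1 v2 \<le> LCS u1 u2"
  using LCS_witness[of v1 v2] by (metis length_le_LCS subseq_order.order_trans)

lemma LCS_snoc_snoc: "LCS u1 u2 + 1 \<le> LCS (u1 @ [a]) (u2 @ [a])"
  using LCS_witness[of u1 u2] by (metis length_append_singleton length_le_LCS
      list_emb_append_mono subseq_order.order_refl Suc_eq_plus1)

lemma LCS_take_mono:
  assumes "x \<le> x'" "y \<le> y'"
  shows "LCS (take x w1) (take y w2) \<le> LCS (take x' w1) (take y' w2)"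
proof (rule LCS_mono)
  show "subseq (take x w1) (take x' w1)" "subseq (take y w2) (take y' w2)"
    using assms take_is_prefix[of x "take x' w1"] take_is_prefix[of y "take y' w2"]
    by (auto simp: min_absorb1)
qed

lemma LCS_take_le: "LCS (take x w1) (take y w2) \<le> LCS w1 w2"
  by (intro LCS_mono prefix_imp_subseq take_is_prefix)

lemma LCS_take_Suc_match:
  assumes "x < length w1" "y < length w2" "w1 ! x = w2 ! y"
  shows "LCS (take x w1) (take y w2) + 1 \<le> LCS (take (Suc x) w1) (take (Suc y) w2)"
  using LCS_snoc_snoc[of "take x w1" "take y w2" "w1 ! x"] assms
  by (simp add: take_Suc_conv_app_nth)

lemma card_same_block_le:
  fixes p :: "nat \<Rightarrow> nat"
  assumes "\<And>i j. i < j \<Longrightarrow> j < n \<Longrightarrow> p i < p j" "\<kappa> > 0"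
  shows "card {i. i < n \<and> p i div \<kappa> = c} \<le> \<kappa>"
proof -
  have "inj_on p {i. i < n \<and> p i div \<kappa> = c}"
  proof (rule inj_onI)
    fix i j assume "i \<in> {i. i < n \<and> p i div \<kappa> = c}" "j \<in> {i. i < n \<and> p i div \<kappa> = c}" "p i = p j"
    then show "i = j"
      using assms(1)[of i j] assms(1)[of j i] by (cases i j rule: linorder_cases) auto
  qed
  moreover have "p ` {i. i < n \<and> p i div \<kappa> = c} \<subseteq> {c * \<kappa>..<c * \<kappa> + \<kappa>}"
  proof
    fix y assume "y \<in> p ` {i. i < n \<and> p i div \<kappa> = c}"
    then have "y div \<kappa> = c" by auto
    then show "y \<in> {c * \<kappa>..<c * \<kappa> + \<kappa>}"
      using div_mult_mod_eq[of y \<kappa>] mod_less_divisor[OF \<open>\<kappa> > 0\<close>, of y] by auto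
  qed
  then have "card (p ` {i. i < n \<and> p i div \<kappa> = c}) \<le> \<kappa>"
    using card_mono[of "{c * \<kappa>..<c * \<kappa> + \<kappa>}"] by fastforce
  ultimately show ?thesis by (simp add: card_image)
qed

text \<open>Rank a matched index i by the LCS of the prefixes of w1, w2 before its blocks. The ranks
  are below LCS w1 w2, and two indices of equal rank must share a block of w1 or of w2,
  so each rank class has at most 2 \<kappa> elements.\<close>
lemma card_matched_blocks_le_LCS:
  fixes n \<kappa> :: nat and b1 b2 :: "nat \<Rightarrow> nat" and S :: "nat set"
  assumes "S \<subseteq> {..<n}"
    and mono: "\<And>i j. i \<le> j \<Longrightarrow> j < n \<Longrightarrow> b1 i \<le> b1 j \<and> b2 i \<le> b2 j"
    and bounds: "\<And>i. i < n \<Longrightarrow> b1 i < length w1 \<and> b2 i < length w2"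
    and match: "\<And>i. i \<in> S \<Longrightarrow> w1 ! b1 i = w2 ! b2 i"
    and block1: "\<And>c. card {i. i < n \<and> b1 i = c} \<le> \<kappa>"
    and block2: "\<And>c. card {i. i < n \<and> b2 i = c} \<le> \<kappa>"
  shows "card S \<le> 2 * \<kappa> * LCS w1 w2"
proof -
  define r where "r i = LCS (take (b1 i) w1) (take (b2 i) w2)" for i
  have r_Suc: "r i + 1 \<le> LCS (take (Suc (b1 i)) w1) (take (Suc (b2 i)) w2)" if "i \<in> S" for i
    unfolding r_def using LCS_take_Suc_match bounds match that assms(1) by blast
  have "r i < LCS w1 w2" if "i \<in> S" for i
    using r_Suc[OF that] LCS_take_le[of "Suc (b1 i)" w1 "Suc (b2 i)" w2] by simp
  then have "S = (\<Union>t<LCS w1 w2. {i \<in> S. r i = t})" by auto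
  moreover have rank_class: "card {i \<in> S. r i = t} \<le> 2 * \<kappa>" for t
  proof (cases "{i \<in> S. r i = t} = {}")
    case False
    define i0 where "i0 = Min {i \<in> S. r i = t}"
    have fin: "finite {i \<in> S. r i = t}"
      by (rule finite_subset[of _ "{..<n}"]) (use assms(1) in auto)
    then have i0: "i0 \<in> S" "r i0 = t" using Min_in False unfolding i0_def by auto
    have "{i \<in> S. r i = t} \<subseteq> {i. i < n \<and> b1 i = b1 i0} \<union> {i. i < n \<and> b2 i = b2 i0}"
    proof
      fix i assume i: "i \<in> {i \<in> S. r i = t}"
      have "i0 \<le> i" "i < n" using fin i assms(1) unfolding i0_def by auto
      then have le: "b1 i0 \<le> b1 i" "b2 i0 \<le> b2 i" using mono by auto
      have "\<not> (Suc (b1 i0) \<le> b1 i \<and> Suc (b2 i0) \<le> b2 i)"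
        using LCS_take_mono[of "Suc (b1 i0)" "b1 i" "Suc (b2 i0)" "b2 i" w1 w2] r_Suc[OF i0(1)]
          i i0 unfolding r_def by auto
      then show "i \<in> {i. i < n \<and> b1 i = b1 i0} \<union> {i. i < n \<and> b2 i = b2 i0}"
        using le \<open>i < n\<close> by auto
    qed
    then have "card {i \<in> S. r i = t}
        \<le> card ({i. i < n \<and> b1 i = b1 i0} \<union> {i. i < n \<and> b2 i = b2 i0})"
      by (intro card_mono) auto
    also have "\<dots> \<le> card {i. i < n \<and> b1 i = b1 i0} + card {i. i < n \<and> b2 i = b2 i0}"
      by (rule card_Un_le)
    also have "\<dots> \<le> 2 * \<kappa>" using block1 block2 by (simp add: add_mono mult_2)
    finally show ?thesis .
  qed (simp only: card.empty zero_le)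
  ultimately have "card S \<le> (\<Sum>t<LCS w1 w2. card {i \<in> S. r i = t})"
    by (metis card_UN_le finite_lessThan)
  also have "\<dots> \<le> (\<Sum>t<LCS w1 w2. 2 * \<kappa>)" using rank_class by (rule sum_mono)
  finally show ?thesis by (simp add: mult.commute)
qed

section \<open>Spans of common subsequences of hat words\<close>

lemma common_subseq_positions:
  assumes "is_common_subseq u1 u2 I1 I2"
  obtains P1 P2 where "sorted_wrt (<) P1" "sorted_wrt (<) P2" "set P1 = I1" "set P2 = I2"
    "length P1 = cs_len u1 I1" "length P2 = length P1"
    "\<And>i. i < length P1 \<Longrightarrow> u1 ! (P1 ! i) = u2 ! (P2 ! i)"
proof
  let ?P1 = "filter (\<lambda>i. i \<in> I1) [0..<length u1]"
  let ?P2 = "filter (\<lambda>i. i \<in> I2) [0..<length u2]"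
  have eq: "map ((!) u1) ?P1 = map ((!) u2) ?P2"
    using assms by (simp add: is_common_subseq_def nths_eq_map_nth_filter)
  then show "length ?P2 = length ?P1" by (metis length_map)
  show "\<And>i. i < length ?P1 \<Longrightarrow> u1 ! (?P1 ! i) = u2 ! (?P2 ! i)"
    using eq \<open>length ?P2 = length ?P1\<close> by (metis nth_map)
  show "length ?P1 = cs_len u1 I1" by (simp add: cs_len_def nths_eq_map_nth_filter)
  show "set ?P1 = I1" "set ?P2 = I2"
    using assms by (auto simp: is_common_subseq_def is_subseq_pos_def)
qed (simp_all add: sorted_wrt_filter)

lemma span_pos_sorted:
  assumes "sorted_wrt (<) P" "length P = Suc m"
  shows "span_pos (set P) = P ! m - P ! 0 + 1"
proof -
  have le: "P ! i \<le> P ! j" if "i \<le> j" "j \<le> m" for i j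
    using sorted_wrt_nth_less[OF assms(1)] assms(2) that by (cases "i = j") (auto simp: less_imp_le)
  have "Max (set P) = P ! m" "Min (set P) = P ! 0"
    using assms le by (auto intro!: Max_eqI Min_eqI simp: in_set_conv_nth)
  then show ?thesis using assms(2) by (auto simp: span_pos_def)
qed

lemma card_equal_hat_levels_le_LCS:
  fixes k R L m :: nat and p q :: "nat \<Rightarrow> nat"
  assumes "R \<ge> 2" "k * L > 0" and w: "set w1 \<subseteq> {1..K}" "set w2 \<subseteq> {1..K}"
    and incr: "\<And>i j. i < j \<Longrightarrow> j \<le> m \<Longrightarrow> p i < p j \<and> q i < q j"
    and bounds: "\<And>i. i \<le> m \<Longrightarrow> p i < k * L * length w1 \<and> q i < k * L * length w2"
  shows "card {i. i \<le> m \<and> hat_level k L R w1 (p i) = hat_level k L R w2 (q i)}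
    \<le> 2 * (k * L) * LCS w1 w2"
proof (rule card_matched_blocks_le_LCS[where n = "Suc m"])
  show "p i div (k * L) \<le> p j div (k * L) \<and> q i div (k * L) \<le> q j div (k * L)"
    if "i \<le> j" "j < Suc m" for i j
    using incr[of i j] that by (cases "i = j") (auto intro: div_le_mono less_imp_le)
  show "p i div (k * L) < length w1 \<and> q i div (k * L) < length w2" if "i < Suc m" for i
    using bounds[of i] that by (auto simp: less_mult_imp_div_less mult.commute)
  show "w1 ! (p i div (k * L)) = w2 ! (q i div (k * L))"
    if "i \<in> {i. i \<le> m \<and> hat_level k L R w1 (p i) = hat_level k L R w2 (q i)}" for i
    using that bounds[of i] by (intro hat_level_eq_imp_letter_eq[of R, OF \<open>R \<ge> 2\<close> w]) auto
  show "card {i. i < Suc m \<and> p i div (k * L) = c} \<le> k * L"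
    "card {i. i < Suc m \<and> q i div (k * L) = c} \<le> k * L" for c
    using incr \<open>k * L > 0\<close> by (auto intro!: card_same_block_le)
qed auto

lemma hat_chain_span_bound:
  fixes k K R L m :: nat and p q :: "nat \<Rightarrow> nat"
  assumes k: "k \<ge> 2" "R \<ge> k" and "L > 0" and dvd: "R ^ (K - 1) dvd L"
    and w: "set w1 \<subseteq> {1..K}" "set w2 \<subseteq> {1..K}"
    and strict: "\<And>i j. i < j \<Longrightarrow> j \<le> m \<Longrightarrow> p i < p j \<and> q i < q j"
    and in_range: "\<And>i. i \<le> m \<Longrightarrow> p i < length (hat k L R w1) \<and> q i < length (hat k L R w2)"
    and same_letter: "\<And>i. i \<le> m \<Longrightarrow> hat k L R w1 ! p i = hat k L R w2 ! q i"
  shows "real (p m - p 0 + 1) + real (q m - q 0 + 1)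
    \<ge> (real k + 1 - real k / real R - 8 * real R ^ (K - 1) / real L) * real (Suc m)
      - 2 * real L * real k * (real k + 1) * real (LCS w1 w2) - 16 * real R ^ (K - 1)"
proof -
  define T where "T = R ^ (K - 1)"
  define A where "A i = hat_level k L R w1 (p i)" for i
  define B where "B i = hat_level k L R w2 (q i)" for i
  define nc where "nc = card {i. i \<le> m \<and> A i \<noteq> B i}"
  define ns where "ns = card {i. i \<le> m \<and> A i = B i}"
  define S where "S = real (p m - p 0) + real (q m - q 0)"
  define c where "c = real k + 1 - real k / real R - 8 * real T / real L"
  have "R > 0" "k * L > 0" using k \<open>L > 0\<close> by auto
  have bounds: "p i < k * L * length w1 \<and> q i < k * L * length w2" if "i \<le> m" for i
    using in_range[OF that] length_hat[OF \<open>R > 0\<close> dvd] w by simp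
  have levels: "0 < A i \<and> 0 < B i \<and> A i \<le> T \<and> B i \<le> T \<and> levels_apart R (A i) (B i)"
    if "i \<le> m" for i
    using bounds[OF that] hat_level_le[OF \<open>R > 0\<close> w(1)] hat_level_le[OF \<open>R > 0\<close> w(2)] \<open>R > 0\<close>
    by (auto simp: A_def B_def T_def hat_level_def levels_apart_powers)
  interpret matched_chain k R T "k * L" m p q A B
  proof
    show "p i div A i mod k = q i div B i mod k" if "i \<le> m" for i
      using same_letter[OF that] bounds[OF that]
        hat_nth[OF \<open>R > 0\<close> dvd w(1)] hat_nth[OF \<open>R > 0\<close> dvd w(2)]
      by (simp add: A_def B_def)
  qed (use k strict levels \<open>k * L > 0\<close> in \<open>auto simp: A_def B_def hat_level_def\<close>)
  have "c * real nc - 16 * real T \<le> S"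
    using switch_span_bound[OF k(1) refl] by (simp add: c_def nc_def S_def switch_gain_def)
  moreover have "c * real ns \<le> 2 * real L * real k * (real k + 1) * real (LCS w1 w2)"
  proof -
    have "c * real ns \<le> (real k + 1) * real (2 * (k * L) * LCS w1 w2)"
    proof (rule mult_mono)
      have "0 \<le> real k / real R" "0 \<le> 8 * real T / real L" by simp_all
      then show "c \<le> real k + 1" unfolding c_def by linarith
      show "real ns \<le> real (2 * (k * L) * LCS w1 w2)" unfolding ns_def A_def B_def of_nat_le_iff
        using k by (intro card_equal_hat_levels_le_LCS[OF _ \<open>k * L > 0\<close> w strict bounds]) auto
    qed auto
    then show ?thesis by (simp add: algebra_simps)
  qed
  moreover have "card ({i. i \<le> m \<and> A i \<noteq> B i} \<union> {i. i \<le> m \<and> A i = B i}) = nc + ns"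
    unfolding nc_def ns_def by (rule card_Un_disjoint) auto
  moreover have "{i. i \<le> m \<and> A i \<noteq> B i} \<union> {i. i \<le> m \<and> A i = B i} = {..<Suc m}" by auto
  ultimately show ?thesis by (simp add: S_def c_def T_def distrib_left)
qed

theorem lemma3p5:
  fixes k K R L :: nat and w1 w2 :: "nat list" and I1 I2 :: "nat set"
  assumes "k \<ge> 2" and "K \<ge> 1" and "R \<ge> k" and "L > 0" and "R ^ (K - 1) dvd L"
    and "set w1 \<subseteq> {1..K}" and "set w2 \<subseteq> {1..K}"
    and "is_common_subseq (hat k L R w1) (hat k L R w2) I1 I2"
  shows "real (cs_span I1 I2) \<ge>
      (real k + 1 - real k / real R - 8 * real R ^ (K - 1) / real L) * real (cs_len (hat k L R w1) I1)
      - 2 * real L * real k * (real k + 1) * real (LCS w1 w2) - 16 * real R ^ (K - 1)"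
proof -
  obtain P1 P2 where sorted: "sorted_wrt (<) P1" "sorted_wrt (<) P2"
    and sets: "set P1 = I1" "set P2 = I2"
    and len: "length P1 = cs_len (hat k L R w1) I1" "length P2 = length P1"
    and match: "\<And>i. i < length P1 \<Longrightarrow> hat k L R w1 ! (P1 ! i) = hat k L R w2 ! (P2 ! i)"
    using common_subseq_positions[OF assms(8)] by blast
  show ?thesis
  proof (cases "length P1")
    case 0
    have "0 \<le> 2 * real L * real k * (real k + 1) * real (LCS w1 w2)" "0 \<le> 16 * real R ^ (K - 1)"
      by simp_all
    moreover have "cs_span I1 I2 = 0" "cs_len (hat k L R w1) I1 = 0"
      using 0 sets len by (auto simp: cs_span_def span_pos_def)
    ultimately show ?thesis by (simp only: of_nat_0 mult_zero_right)
  next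
    case (Suc m)
    have "P1 ! i < length (hat k L R w1) \<and> P2 ! i < length (hat k L R w2)" if "i \<le> m" for i
      using that Suc len sets assms(8) nth_mem[of i P1] nth_mem[of i P2]
      by (auto simp: is_common_subseq_def is_subseq_pos_def)
    moreover have "cs_span I1 I2 = (P1 ! m - P1 ! 0 + 1) + (P2 ! m - P2 ! 0 + 1)"
      using span_pos_sorted[OF sorted(1)] span_pos_sorted[OF sorted(2)] Suc len sets
      by (simp add: cs_span_def)
    ultimately show ?thesis
      using hat_chain_span_bound[OF assms(1,3,4,5,6,7), of m "(!) P1" "(!) P2"]
        sorted_wrt_nth_less[OF sorted(1)] sorted_wrt_nth_less[OF sorted(2)] match Suc len
      by fastforce
  qed
qed

end
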